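(* Let $\lambda\in\mathbb{R}$, let $n$ be a positive integer and let $k$ be a positive integer. Then \[ S_{k,\lambda}(n)=\frac{n\,(n+1)_{k,\lambda}}{k+1}-\frac{1}{k+1}\sum_{r=1}^{k-1}(1)_{k+1-r,\lambda}\binom{k}{r-1}S_{r,\lambda}(n)-\frac{\lambda}{k+1}\sum_{r=1}^{k-1}r\binom{k}{r}(1)_{k-r,\lambda}\,S_{r,\lambda}(n). \]
   Context: For $\lambda\in\mathbb{R}$ the degenerate falling factorials are $(x)_{0,\lambda}=1$ and $(x)_{m,\lambda}=x(x-\lambda)(x-2\lambda)\cdots(x-(m-1)\lambda)$ for $m\ge 1$. For positive integers $r,n$, $S_{r,\lambda}(n)=\sum_{j=1}^{n}(j)_{r,\lambda}=(1)_{r,\lambda}+(2)_{r,\lambda}+\cdots+(n)_{r,\lambda}$. *)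

theory Defs
  imports Complex_Main
begin

definition dff :: "real \<Rightarrow> nat \<Rightarrow> real \<Rightarrow> real" where
  "dff x m lam = (\<Prod>i<m. x - real i * lam)"

definition Sdeg :: "nat \<Rightarrow> real \<Rightarrow> nat \<Rightarrow> real" where
  "Sdeg r lam n = (\<Sum>j=1..n. dff (real j) r lam)"

end

theory Submission imports Defs begin

(* By the degenerate binomial theorem (x + 1)_{k,lambda} = sum_i C(k,i) (1)_{k-i,lambda} (x)_{i,lambda}
   and x (x)_{i,lambda} = (x)_{i+1,lambda} + i lambda (x)_{i,lambda}, the increment
   x (x + 1)_{k,lambda} - (x - 1) (x)_{k,lambda} is a linear combination of (x)_{1,lambda}, ...,
   (x)_{k,lambda} whose top coefficient is k + 1. Summing it over x = 1, ..., n telescopes to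
   n (n + 1)_{k,lambda} on the left and gives the same combination of the power sums S_{r,lambda}(n)
   on the right; solving for S_{k,lambda}(n) yields the formula. *)

lemma dff_0 [simp]: "dff x 0 lam = 1"
  by (simp add: dff_def)

lemma dff_Suc: "dff x (Suc m) lam = dff x m lam * (x - real m * lam)"
  by (simp add: dff_def)

lemma dff_Suc_left: "dff x (Suc m) lam = x * dff (x - lam) m lam"
  unfolding dff_def prod.lessThan_Suc_shift by (simp add: algebra_simps)

lemma mult_dff_self: "x * dff x m lam = dff x (Suc m) lam + real m * lam * dff x m lam"
  by (simp add: dff_Suc algebra_simps)

lemma dff_add:
  "dff (a + b) m lam = (\<Sum>i\<le>m. real (m choose i) * dff a i lam * dff b (m - i) lam)"
proof (induction m arbitrary: a b)
  case 0
  then show ?case by simp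
next
  case (Suc m a b)
  have "(\<Sum>i\<le>Suc m. real (Suc m choose i) * dff a i lam * dff b (Suc m - i) lam) =
      (\<Sum>i\<le>m. real (m choose i) * dff a (Suc i) lam * dff b (m - i) lam) +
      ((\<Sum>i\<le>m. real (m choose Suc i) * dff a (Suc i) lam * dff b (m - i) lam) +
      dff b (Suc m) lam)"
    by (subst sum.atMost_Suc_shift) (simp add: ring_distribs sum.distrib)
  also have "(\<Sum>i\<le>m. real (m choose i) * dff a (Suc i) lam * dff b (m - i) lam) =
      a * dff ((a - lam) + b) m lam"
    by (subst Suc) (simp add: sum_distrib_left dff_Suc_left mult_ac)
  also have "(\<Sum>i\<le>m. real (m choose Suc i) * dff a (Suc i) lam * dff b (m - i) lam)
      + dff b (Suc m) lam
      = (\<Sum>i\<le>m. real (m choose i) * dff a i lam * dff b (Suc (m - i)) lam)"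
  proof -
    have "(\<Sum>i\<le>m. real (m choose Suc i) * dff a (Suc i) lam * dff b (m - i) lam)
        = (\<Sum>i<m. real (m choose Suc i) * dff a (Suc i) lam * dff b (Suc (m - Suc i)) lam)"
      by (rule sum.mono_neutral_cong_right) (auto simp: Suc_diff_Suc)
    then show ?thesis
      by (simp add: sum.atMost_shift[where n = m])
  qed
  also have "\<dots> = b * dff (a + (b - lam)) m lam"
    by (subst Suc) (simp add: sum_distrib_left mult_ac dff_Suc_left)
  also have "a * dff ((a - lam) + b) m lam + b * dff (a + (b - lam)) m lam =
      dff (a + b) (Suc m) lam"
    by (simp add: dff_Suc_left algebra_simps)
  finally show ?case ..
qed

lemma dff_shift_difference:
  "x * dff (x + 1) k lam - (x - 1) * dff x k lam =
     (real k + 1) * dff x k lam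
     + (\<Sum>r=1..k-1. dff 1 (k + 1 - r) lam * real (k choose (r - 1)) * dff x r lam)
     + lam * (\<Sum>r=1..k-1. real r * real (k choose r) * dff 1 (k - r) lam * dff x r lam)"
proof (cases k)
  case 0
  then show ?thesis by simp
next
  case (Suc m)
  have "x * dff (x + 1) k lam =
      (\<Sum>i\<le>k. real (k choose i) * dff 1 (k - i) lam * (x * dff x i lam))"
    by (simp add: dff_add sum_distrib_left mult_ac)
  also have "\<dots> =
      (\<Sum>i\<le>k. real (k choose i) * dff 1 (k - i) lam * dff x (Suc i) lam)
      + lam * (\<Sum>i\<le>k. real i * real (k choose i) * dff 1 (k - i) lam * dff x i lam)"
    by (simp add: mult_dff_self ring_distribs sum.distrib sum_distrib_left mult_ac)
  also have "(\<Sum>i\<le>k. real (k choose i) * dff 1 (k - i) lam * dff x (Suc i) lam) =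
      dff x (Suc k) lam + real k * dff x k lam
      + (\<Sum>r=1..m. dff 1 (k + 1 - r) lam * real (k choose (r - 1)) * dff x r lam)"
    by (simp add: Suc lessThan_Suc_atMost[symmetric] sum.atLeast1_atMost_eq dff_Suc mult_ac)
  also have "(\<Sum>i\<le>k. real i * real (k choose i) * dff 1 (k - i) lam * dff x i lam) =
      real k * dff x k lam
      + (\<Sum>r=1..m. real r * real (k choose r) * dff 1 (k - r) lam * dff x r lam)"
    by (simp add: Suc atMost_atLeast0 sum.atLeast_Suc_atMost)
  moreover have "(x - 1) * dff x k lam = dff x (Suc k) lam + real k * lam * dff x k lam - dff x k lam"
    using mult_dff_self[of x k lam] by (simp add: algebra_simps)
  ultimately show ?thesis
    by (simp add: Suc algebra_simps)
qed

lemma Sdeg_eq_sum_lessThan: "Sdeg r lam n = (\<Sum>i<n. dff (real i + 1) r lam)"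
  by (simp add: Sdeg_def sum.atLeast1_atMost_eq add.commute)

lemma Sdeg_recurrence:
  "real n * dff (real n + 1) k lam =
     (real k + 1) * Sdeg k lam n
     + (\<Sum>r=1..k-1. dff 1 (k + 1 - r) lam * real (k choose (r - 1)) * Sdeg r lam n)
     + lam * (\<Sum>r=1..k-1. real r * real (k choose r) * dff 1 (k - r) lam * Sdeg r lam n)"
proof -
  define f where "f j = real j * dff (real j + 1) k lam" for j :: nat
  have "real n * dff (real n + 1) k lam = (\<Sum>i<n. f (Suc i) - f i)"
    unfolding sum_lessThan_telescope by (simp add: f_def)
  also have "\<dots> = (\<Sum>i<n. (real k + 1) * dff (real i + 1) k lam
     + (\<Sum>r=1..k-1. dff 1 (k + 1 - r) lam * real (k choose (r - 1)) * dff (real i + 1) r lam)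
     + lam * (\<Sum>r=1..k-1. real r * real (k choose r) * dff 1 (k - r) lam * dff (real i + 1) r lam))"
  proof (intro sum.cong refl)
    fix i
    have "f (Suc i) - f i =
        (real i + 1) * dff (real i + 1 + 1) k lam - (real i + 1 - 1) * dff (real i + 1) k lam"
      by (simp add: f_def add_ac)
    then show "f (Suc i) - f i = (real k + 1) * dff (real i + 1) k lam
     + (\<Sum>r=1..k-1. dff 1 (k + 1 - r) lam * real (k choose (r - 1)) * dff (real i + 1) r lam)
     + lam * (\<Sum>r=1..k-1. real r * real (k choose r) * dff 1 (k - r) lam * dff (real i + 1) r lam)"
      by (simp only: dff_shift_difference)
  qed
  also have "\<dots> = (real k + 1) * Sdeg k lam n
     + (\<Sum>r=1..k-1. dff 1 (k + 1 - r) lam * real (k choose (r - 1)) * Sdeg r lam n)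
     + lam * (\<Sum>r=1..k-1. real r * real (k choose r) * dff 1 (k - r) lam * Sdeg r lam n)"
    by (simp add: Sdeg_eq_sum_lessThan sum.distrib sum_distrib_left sum.swap[of _ "{..<n}"])
  finally show ?thesis .
qed

theorem theorem3p2:
  fixes lam :: real and n k :: nat
  assumes "n \<ge> 1" and "k \<ge> 1"
  shows "Sdeg k lam n =
    real n * dff (real n + 1) k lam / (real k + 1)
    - (1 / (real k + 1)) * (\<Sum>r=1..k-1. dff 1 (k + 1 - r) lam * real (k choose (r - 1)) * Sdeg r lam n)
    - (lam / (real k + 1)) * (\<Sum>r=1..k-1. real r * real (k choose r) * dff 1 (k - r) lam * Sdeg r lam n)"
proof -
  have solve: "S = N / c - (1 / c) * A - (lam / c) * B"
    if "N = c * S + A + lam * B" and "c \<noteq> 0" for S N A B c :: real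
    using that by (simp add: field_simps)
  show ?thesis
    by (rule solve[OF Sdeg_recurrence]) linarith
qed

end
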